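(* Run the Unbiased Space Saving sketch with $m$ bins on an i.i.d. stream of items drawn from a discrete distribution with probabilities $p_1 \ge p_2 \ge \cdots$. Let $B_i(t)$ denote the count in the $i$-th bin after $t$ rows. If $p_1 < 1/m$, then with probability $1$, $B_i(t) - t/m < (\log t)^2 + 1$ for all sufficiently large $t$.
   Context: Unbiased Space Saving sketch with $m$ bins: maintain $m$ bins, each an (item, count) pair, counts initialized to $0$. For each new row with item $x_{new}$: if $x_{new}$ is the label of a bin, increment its count by $1$; otherwise choose a bin with the smallest count $\hat{N}_{min}$ (uniformly at random among all bins sharing the smallest count), increment its count by $1$, and with probability $1/(\hat{N}_{min}+1)$ replace its label by $x_{new}$. *)

theory Defs
  imports "HOL-Probability.Probability"
begin

text \<open>Unbiased Space Saving sketch with m bins, indexed 0..m-1.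
  A state is a pair (lab, cnt): lab i is the label of bin i (None = no label yet),
  cnt i is its count.\<close>

type_synonym uss_state = "(nat \<Rightarrow> nat option) \<times> (nat \<Rightarrow> nat)"

definition uss_init :: uss_state where
  "uss_init = ((\<lambda>_. None), (\<lambda>_. 0))"

text \<open>The auxiliary randomness u, v (independent,
  uniform on [0,1)) realises the two random choices: u selects uniformly one of the
  k bins sharing the smallest count (the floor(u*k)-th of them in index order), and the
  label is replaced iff v < 1/(Nmin+1), i.e. with probability 1/(Nmin+1).\<close>

definition uss_step :: "nat \<Rightarrow> uss_state \<Rightarrow> nat \<times> real \<times> real \<Rightarrow> uss_state" where
  "uss_step m s r =
    (case s of (lab, cnt) \<Rightarrow> case r of (x, u, v) \<Rightarrow>
      if \<exists>i<m. lab i = Some x then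
        (let i = (LEAST i. i < m \<and> lab i = Some x) in (lab, cnt(i := Suc (cnt i))))
      else
        (let Nmin = Min (cnt ` {..<m});
             T = filter (\<lambda>i. cnt i = Nmin) [0..<m];
             j = T ! nat \<lfloor>u * real (length T)\<rfloor>
         in ((if v < 1 / (real Nmin + 1) then lab(j := Some x) else lab),
             cnt(j := Suc Nmin))))"

primrec uss_run :: "nat \<Rightarrow> (nat \<times> real \<times> real) stream \<Rightarrow> nat \<Rightarrow> uss_state" where
  "uss_run m \<omega> 0 = uss_init"
| "uss_run m \<omega> (Suc t) = uss_step m (uss_run m \<omega> t) (\<omega> !! t)"

definition uss_row_measure :: "nat pmf \<Rightarrow> (nat \<times> real \<times> real) measure" where
  "uss_row_measure P = measure_pmf P \<Otimes>\<^sub>M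
     (uniform_measure lborel {0..<1::real} \<Otimes>\<^sub>M uniform_measure lborel {0..<1::real})"

definition uss_space :: "nat pmf \<Rightarrow> (nat \<times> real \<times> real) stream measure" where
  "uss_space P = stream_space (uss_row_measure P)"

definition uss_bin :: "nat \<Rightarrow> (nat \<times> real \<times> real) stream \<Rightarrow> nat \<Rightarrow> nat \<Rightarrow> nat" where
  "uss_bin m \<omega> i t = snd (uss_run m \<omega> t) i"

end

theory Submission
  imports Defs "HOL-Real_Asymp.Real_Asymp"
begin

text \<open>As long as bin i stays strictly above the average, it is never a minimal bin, so its
  label is frozen and it only grows on rows carrying that label.  Taking the last time s \<le> t
  at which B_i(s) \<le> s/m, the excess B_i(t) - t/m is therefore at most 1 plus the excess over
  (t - s - 1)/m of the number of occurrences, in rows s+1, ..., t-1, of an item seen at some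
  row j \<le> s.  Since every item has probability at most p_1 < 1/m, an exponential moment
  bound with a rate l > 0 shows that the probability of one of these O(t^2) excesses
  reaching (ln t)^2 is O(t^2 exp (-l (ln t)^2)), which is summable; Borel-Cantelli concludes.\<close>

subsection \<open>Independence in i.i.d. streams\<close>

lemma (in prob_space) nn_integral_stream_space_sdrop:
  assumes [measurable]: "f \<in> borel_measurable (stream_space M)"
  shows "(\<integral>\<^sup>+\<omega>. f (sdrop n \<omega>) \<partial>stream_space M) = (\<integral>\<^sup>+\<omega>. f \<omega> \<partial>stream_space M)"
proof (induction n)
  case (Suc n)
  interpret S: prob_space "stream_space M" by (rule prob_space_stream_space)
  have "(\<integral>\<^sup>+\<omega>. f (sdrop (Suc n) \<omega>) \<partial>stream_space M)
      = (\<integral>\<^sup>+x. (\<integral>\<^sup>+\<omega>. f (sdrop n \<omega>) \<partial>stream_space M) \<partial>M)"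
    by (subst nn_integral_stream_space) auto
  then show ?case using Suc by (simp add: emeasure_space_1)
qed simp

lemma (in prob_space) nn_integral_stream_space_snth_sdrop:
  fixes h :: "'a \<Rightarrow> 'b::countable"
  assumes [measurable]: "\<And>x. g x \<in> borel_measurable (stream_space M)"
    and [measurable]: "h \<in> measurable M (count_space UNIV)"
    and "j < a"
  shows "(\<integral>\<^sup>+\<omega>. g (h (\<omega> !! j)) (sdrop a \<omega>) \<partial>stream_space M)
       = (\<integral>\<^sup>+r. (\<integral>\<^sup>+\<omega>. g (h r) \<omega> \<partial>stream_space M) \<partial>M)"
  using \<open>j < a\<close>
proof (induction j arbitrary: a)
  case (0 a)
  then obtain b where a: "a = Suc b" by (cases a) auto
  have [measurable]: "(\<lambda>\<omega>. g (h (\<omega> !! 0)) (sdrop a \<omega>)) \<in> borel_measurable (stream_space M)"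
    by (rule measurable_compose_countable'[where f="\<lambda>i \<omega>. g i (sdrop a \<omega>)" and I=UNIV]) auto
  show ?case
    by (subst nn_integral_stream_space) (simp_all add: a nn_integral_stream_space_sdrop)
next
  case (Suc j a)
  then obtain b where a: "a = Suc b" and "j < b" by (cases a) auto
  interpret S: prob_space "stream_space M" by (rule prob_space_stream_space)
  have [measurable]: "(\<lambda>\<omega>. g (h (\<omega> !! Suc j)) (sdrop a \<omega>)) \<in> borel_measurable (stream_space M)"
    by (rule measurable_compose_countable'[where f="\<lambda>i \<omega>. g i (sdrop a \<omega>)" and I=UNIV]) auto
  show ?case
    by (subst nn_integral_stream_space) (simp_all add: a Suc.IH[OF \<open>j < b\<close>] emeasure_space_1)
qed

subsection \<open>Exponential moments of occurrence counts\<close>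

definition window_count :: "('a \<Rightarrow> 'b) \<Rightarrow> 'a stream \<Rightarrow> 'b \<Rightarrow> nat \<Rightarrow> nat \<Rightarrow> nat" where
  "window_count h \<omega> x a n = (\<Sum>k<n. if h (\<omega> !! (a + k)) = x then 1 else 0)"

lemma window_count_sdrop: "window_count h \<omega> x a n = window_count h (sdrop a \<omega>) x 0 n"
  by (simp add: window_count_def sdrop_snth add.commute)

lemma window_count_Stream:
  "window_count h (r ## \<omega>) x 0 (Suc n) = (if h r = x then 1 else 0) + window_count h \<omega> x 0 n"
  unfolding window_count_def by (simp add: sum.lessThan_Suc_shift del: sum.lessThan_Suc)

lemma window_count_Suc:
  "window_count h \<omega> x a (Suc n) = window_count h \<omega> x a n + (if h (\<omega> !! (a + n)) = x then 1 else 0)"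
  by (simp add: window_count_def)

lemma measurable_window_count[measurable]:
  assumes [measurable]: "h \<in> measurable M (count_space UNIV)"
  shows "(\<lambda>\<omega>. window_count h \<omega> x a n) \<in> measurable (stream_space M) (count_space UNIV)"
  unfolding window_count_def by measurable

lemma measurable_window_count_snth[measurable]:
  fixes h :: "'a \<Rightarrow> 'b::countable"
  assumes [measurable]: "h \<in> measurable M (count_space UNIV)"
  shows "(\<lambda>\<omega>. window_count h \<omega> (h (\<omega> !! j)) a n) \<in> measurable (stream_space M) (count_space UNIV)"
  by (rule measurable_compose_countable'[where f="\<lambda>x \<omega>. window_count h \<omega> x a n" and I=UNIV]) auto

lemma (in prob_space) nn_integral_exp_indicator_eq:
  fixes l :: real
  assumes [measurable]: "h \<in> measurable M (count_space UNIV)" and "0 \<le> l"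
  shows "(\<integral>\<^sup>+r. ennreal (exp (l * (if h r = x then 1 else 0))) \<partial>M)
       = ennreal (1 + (exp l - 1) * \<P>(r in M. h r = x))"
proof -
  let ?A = "{r \<in> space M. h r = x}"
  have "0 \<le> exp l - 1" using \<open>0 \<le> l\<close> by simp
  then have exp_l: "ennreal (exp l) = 1 + ennreal (exp l - 1)"
    using ennreal_plus[of 1 "exp l - 1"] by simp
  have "(\<integral>\<^sup>+r. ennreal (exp (l * (if h r = x then 1 else 0))) \<partial>M)
      = (\<integral>\<^sup>+r. 1 + ennreal (exp l - 1) * indicator ?A r \<partial>M)"
    by (intro nn_integral_cong) (auto simp: indicator_def exp_l)
  also have "\<dots> = 1 + ennreal (exp l - 1) * emeasure M ?A"
    by (subst nn_integral_add) (auto simp: nn_integral_cmult_indicator emeasure_space_1)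
  also have "\<dots> = ennreal (1 + (exp l - 1) * \<P>(r in M. h r = x))"
    using \<open>0 \<le> exp l - 1\<close>
    by (simp add: emeasure_eq_measure ennreal_plus ennreal_mult del: ennreal_1)
  finally show ?thesis .
qed

lemma (in prob_space) nn_integral_exp_window_count:
  fixes h :: "'a \<Rightarrow> 'b::countable" and l :: real
  assumes [measurable]: "h \<in> measurable M (count_space UNIV)" and "0 \<le> l"
  shows "(\<integral>\<^sup>+\<omega>. ennreal (exp (l * window_count h \<omega> x 0 n)) \<partial>stream_space M)
       = ennreal ((1 + (exp l - 1) * \<P>(r in M. h r = x)) ^ n)"
proof (induction n)
  case 0
  interpret S: prob_space "stream_space M" by (rule prob_space_stream_space)
  show ?case by (simp add: window_count_def S.emeasure_space_1)
next
  case (Suc n)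
  let ?E = "\<lambda>r. ennreal (exp (l * (if h r = x then 1 else 0)))"
  have "(\<integral>\<^sup>+\<omega>. ennreal (exp (l * window_count h \<omega> x 0 (Suc n))) \<partial>stream_space M)
      = (\<integral>\<^sup>+r. (\<integral>\<^sup>+\<omega>. ?E r * ennreal (exp (l * window_count h \<omega> x 0 n)) \<partial>stream_space M) \<partial>M)"
    by (subst nn_integral_stream_space)
       (auto simp: window_count_Stream distrib_left exp_add ennreal_mult intro!: nn_integral_cong)
  also have "\<dots> = (\<integral>\<^sup>+r. ?E r \<partial>M) * ennreal ((1 + (exp l - 1) * \<P>(r in M. h r = x)) ^ n)"
    by (simp add: nn_integral_cmult nn_integral_multc Suc)
  finally show ?case
    using \<open>0 \<le> l\<close> by (simp add: nn_integral_exp_indicator_eq ennreal_mult' flip: ennreal_power)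
qed

lemma (in prob_space) nn_integral_exp_window_count_earlier_item_le:
  fixes h :: "'a \<Rightarrow> 'b::countable" and l c :: real
  assumes [measurable]: "h \<in> measurable M (count_space UNIV)"
    and "0 \<le> l" and rate: "\<And>x. (exp l - 1) * \<P>(r in M. h r = x) \<le> c" and "j < a"
  shows "(\<integral>\<^sup>+\<omega>. ennreal (exp (l * window_count h \<omega> (h (\<omega> !! j)) a n)) \<partial>stream_space M)
       \<le> ennreal (exp (c * n))"
proof -
  have "(\<integral>\<^sup>+\<omega>. ennreal (exp (l * window_count h \<omega> (h (\<omega> !! j)) a n)) \<partial>stream_space M)
      = (\<integral>\<^sup>+r. ennreal ((1 + (exp l - 1) * \<P>(r' in M. h r' = h r)) ^ n) \<partial>M)"
    using nn_integral_stream_space_snth_sdrop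
      [of "\<lambda>x \<omega>. ennreal (exp (l * window_count h \<omega> x 0 n))" h j a] \<open>j < a\<close> \<open>0 \<le> l\<close>
    by (simp add: window_count_sdrop[of _ _ _ a] nn_integral_exp_window_count)
  also have "\<dots> \<le> (\<integral>\<^sup>+r. ennreal (exp (c * n)) \<partial>M)"
  proof (intro nn_integral_mono ennreal_leI)
    fix r
    have "1 + (exp l - 1) * \<P>(r' in M. h r' = h r) \<le> exp c"
      using rate[of "h r"] exp_ge_add_one_self[of c] by linarith
    moreover have "0 \<le> 1 + (exp l - 1) * \<P>(r' in M. h r' = h r)"
      using \<open>0 \<le> l\<close> by simp
    ultimately show "(1 + (exp l - 1) * \<P>(r' in M. h r' = h r)) ^ n \<le> exp (c * n)"
      using power_mono by (fastforce simp: exp_of_nat_mult[symmetric] mult.commute)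
  qed
  finally show ?thesis by (simp add: emeasure_space_1)
qed

lemma (in prob_space) nn_integral_exp_window_count_excess_le:
  fixes h :: "'a \<Rightarrow> 'b::countable" and l q L :: real
  assumes [measurable]: "h \<in> measurable M (count_space UNIV)"
    and "0 \<le> l" and "\<And>x. (exp l - 1) * \<P>(r in M. h r = x) \<le> l * q" and "j \<le> s"
  shows "(\<integral>\<^sup>+\<omega>. exp (l * (real (window_count h \<omega> (h (\<omega> !! j)) (Suc s) n) - q * real n - L))
           \<partial>stream_space M) \<le> exp (- l * L)"
proof -
  have "(\<integral>\<^sup>+\<omega>. exp (l * (real (window_count h \<omega> (h (\<omega> !! j)) (Suc s) n) - q * real n - L))
        \<partial>stream_space M)
      = (\<integral>\<^sup>+\<omega>. exp (l * window_count h \<omega> (h (\<omega> !! j)) (Suc s) n) \<partial>stream_space M)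
        * ennreal (exp (- (l * q * n + l * L)))"
    by (subst nn_integral_multc[symmetric])
       (auto simp: ennreal_mult[symmetric] exp_add[symmetric] algebra_simps intro!: nn_integral_cong)
  also have "\<dots> \<le> ennreal (exp (l * q * n)) * ennreal (exp (- (l * q * n + l * L)))"
    using assms by (intro mult_right_mono nn_integral_exp_window_count_earlier_item_le) auto
  also have "\<dots> = exp (- l * L)"
    by (simp add: ennreal_mult[symmetric] exp_add[symmetric])
  finally show ?thesis .
qed

lemma exists_exp_rate:
  fixes p q :: real
  assumes "0 \<le> p" and "p < q"
  shows "\<exists>l>0. (exp l - 1) * p \<le> l * q"
proof (cases "p = 0")
  case True
  with assms show ?thesis by (intro exI[of _ 1]) auto
next
  case False
  with assms have "0 < p" by simp
  define l where "l = ln (q / p)"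
  have exp_l: "exp l = q / p" using \<open>0 < p\<close> \<open>p < q\<close> by (simp add: l_def)
  have "0 < l" using \<open>0 < p\<close> \<open>p < q\<close> by (simp add: l_def)
  moreover have "(exp l - 1) * p \<le> l * q"
  proof -
    have "1 - l \<le> p / q" using exp_minus_ge[of l] \<open>0 < p\<close> by (simp add: exp_minus exp_l)
    then have "q - p \<le> l * q" using \<open>0 < p\<close> \<open>p < q\<close> by (simp add: field_simps)
    moreover have "(exp l - 1) * p = q - p" using \<open>0 < p\<close> by (simp add: exp_l field_simps)
    ultimately show ?thesis by simp
  qed
  ultimately show ?thesis by blast
qed

subsection \<open>A Borel-Cantelli argument\<close>

lemma AE_tendsto_zero_of_summable_nn_integral:
  fixes X :: "nat \<Rightarrow> 'a \<Rightarrow> real"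
  assumes [measurable]: "\<And>t. X t \<in> borel_measurable M" and X_nonneg: "\<And>t \<omega>. 0 \<le> X t \<omega>"
    and bound: "\<And>t. (\<integral>\<^sup>+\<omega>. X t \<omega> \<partial>M) \<le> ennreal (b t)"
    and "\<And>t. 0 \<le> b t" and "summable b"
  shows "AE \<omega> in M. (\<lambda>t. X t \<omega>) \<longlonglongrightarrow> 0"
proof -
  have "(\<integral>\<^sup>+\<omega>. (\<Sum>t. ennreal (X t \<omega>)) \<partial>M) = (\<Sum>t. \<integral>\<^sup>+\<omega>. X t \<omega> \<partial>M)"
    by (rule nn_integral_suminf) auto
  also have "\<dots> \<le> (\<Sum>t. ennreal (b t))"
    by (intro suminf_le bound) auto
  also have "\<dots> = ennreal (\<Sum>t. b t)"
    by (rule suminf_ennreal2) (use assms in auto)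
  finally have "(\<integral>\<^sup>+\<omega>. (\<Sum>t. ennreal (X t \<omega>)) \<partial>M) \<noteq> \<infinity>"
    using top.extremum_uniqueI by fastforce
  then have "AE \<omega> in M. (\<Sum>t. ennreal (X t \<omega>)) \<noteq> \<infinity>"
    by (rule nn_integral_PInf_AE[rotated]) auto
  then show ?thesis
  proof (rule eventually_mono)
    fix \<omega> assume "(\<Sum>t. ennreal (X t \<omega>)) \<noteq> \<infinity>"
    then have "summable (\<lambda>t. X t \<omega>)"
      by (intro summable_suminf_not_top) (auto simp: X_nonneg)
    then show "(\<lambda>t. X t \<omega>) \<longlonglongrightarrow> 0" by (rule summable_LIMSEQ_zero)
  qed
qed

lemma summable_square_mult_exp_neg_ln_square:
  fixes l :: real
  assumes "0 < l"
  shows "summable (\<lambda>t::nat. real t ^ 2 * exp (- l * (ln (real t))\<^sup>2))"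
proof (rule summable_comparison_test_ev[OF _ inverse_power_summable[of 2]])
  have "eventually (\<lambda>x::real. x ^ 2 * exp (- l * (ln x)\<^sup>2) \<le> inverse (x ^ 2)) at_top"
    using assms by real_asymp
  then show "eventually (\<lambda>t. norm (real t ^ 2 * exp (- l * (ln (real t))\<^sup>2)) \<le> inverse (real t ^ 2))
      sequentially"
    by (rule eventually_mono[OF eventually_compose_filterlim[OF _ filterlim_real_sequentially]]) simp
qed simp

lemma (in prob_space) AE_eventually_window_count_excess_less:
  fixes h :: "'a \<Rightarrow> 'b::countable" and l q :: real
  assumes [measurable]: "h \<in> measurable M (count_space UNIV)"
    and "0 < l" and rate: "\<And>x. (exp l - 1) * \<P>(r in M. h r = x) \<le> l * q"
  shows "AE \<omega> in stream_space M. eventually (\<lambda>t. \<forall>s<t. \<forall>j\<le>s.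
     real (window_count h \<omega> (h (\<omega> !! j)) (Suc s) (t - Suc s)) - q * real (t - Suc s)
       < (ln (real t))\<^sup>2) sequentially"
proof -
  define excess where "excess t s j \<omega> =
    real (window_count h \<omega> (h (\<omega> !! j)) (Suc s) (t - Suc s)) - q * real (t - Suc s) - (ln (real t))\<^sup>2"
    for t s j \<omega>
  define X where "X t \<omega> = (\<Sum>s<t. \<Sum>j\<le>s. exp (l * excess t s j \<omega>))" for t \<omega>
  have [measurable]: "(\<lambda>\<omega>. excess t s j \<omega>) \<in> borel_measurable (stream_space M)" for t s j
    unfolding excess_def by measurable
  have [measurable]: "X t \<in> borel_measurable (stream_space M)" for t
    unfolding X_def by measurable
  have excess_moment: "(\<integral>\<^sup>+\<omega>. exp (l * excess t s j \<omega>) \<partial>stream_space M) \<le> exp (- l * (ln (real t))\<^sup>2)"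
    if "j \<le> s" for t s j
    unfolding excess_def using \<open>0 < l\<close> rate \<open>j \<le> s\<close>
    by (intro nn_integral_exp_window_count_excess_le) auto
  have "(\<integral>\<^sup>+\<omega>. X t \<omega> \<partial>stream_space M) \<le> ennreal (real t ^ 2 * exp (- l * (ln (real t))\<^sup>2))" for t
  proof -
    have "(\<integral>\<^sup>+\<omega>. X t \<omega> \<partial>stream_space M) = (\<Sum>s<t. \<Sum>j\<le>s. \<integral>\<^sup>+\<omega>. exp (l * excess t s j \<omega>) \<partial>stream_space M)"
    proof -
      have [measurable]: "(\<lambda>\<omega>. ennreal (exp (l * excess t s j \<omega>))) \<in> borel_measurable (stream_space M)"
        for s j by measurable
      show ?thesis
        unfolding X_def by (simp add: sum_nonneg nn_integral_sum flip: sum_ennreal)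
    qed
    also have "\<dots> \<le> (\<Sum>s<t. \<Sum>j\<le>s. ennreal (exp (- l * (ln (real t))\<^sup>2)))"
      by (intro sum_mono excess_moment) auto
    also have "\<dots> \<le> (\<Sum>s<t. \<Sum>j<t. ennreal (exp (- l * (ln (real t))\<^sup>2)))"
      by (intro sum_mono sum_mono2) auto
    finally show ?thesis by (simp add: power2_eq_square ennreal_mult ennreal_of_nat_eq_real_of_nat mult.assoc)
  qed
  then have "AE \<omega> in stream_space M. (\<lambda>t. X t \<omega>) \<longlonglongrightarrow> 0"
    using summable_square_mult_exp_neg_ln_square[OF \<open>0 < l\<close>]
    by (intro AE_tendsto_zero_of_summable_nn_integral) (auto simp: X_def sum_nonneg)
  then show ?thesis
  proof (rule eventually_mono)
    fix \<omega> assume "(\<lambda>t. X t \<omega>) \<longlonglongrightarrow> 0"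
    then have "eventually (\<lambda>t. X t \<omega> < 1) sequentially" by (rule order_tendstoD) simp
    then have "eventually (\<lambda>t. \<forall>s<t. \<forall>j\<le>s. excess t s j \<omega> < 0) sequentially"
    proof (rule eventually_mono, intro allI impI)
      fix t s j assume "X t \<omega> < 1" "s < t" "j \<le> s"
      have "exp (l * excess t s j \<omega>) \<le> (\<Sum>j\<le>s. exp (l * excess t s j \<omega>))"
        by (rule member_le_sum) (use \<open>j \<le> s\<close> in auto)
      also have "\<dots> \<le> X t \<omega>"
        unfolding X_def by (rule member_le_sum[where f="\<lambda>s. \<Sum>j\<le>s. exp (l * excess t s j \<omega>)"])
          (use \<open>s < t\<close> in \<open>auto intro: sum_nonneg\<close>)
      finally have "exp (l * excess t s j \<omega>) < 1" using \<open>X t \<omega> < 1\<close> by linarith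
      with \<open>0 < l\<close> show "excess t s j \<omega> < 0" by (simp add: mult_less_0_iff)
    qed
    then show "eventually (\<lambda>t. \<forall>s<t. \<forall>j\<le>s.
        real (window_count h \<omega> (h (\<omega> !! j)) (Suc s) (t - Suc s)) - q * real (t - Suc s)
          < (ln (real t))\<^sup>2) sequentially"
      by (rule eventually_mono) (simp add: excess_def)
  qed
qed

lemma prob_space_unit_uniform: "prob_space (uniform_measure lborel {0..<1::real})"
  by (intro prob_space_uniform_measure) auto

lemma prob_space_uss_row_measure: "prob_space (uss_row_measure P)"
proof -
  interpret U: prob_space "uniform_measure lborel {0..<1::real}" by (rule prob_space_unit_uniform)
  interpret UU: pair_prob_space "uniform_measure lborel {0..<1::real}" "uniform_measure lborel {0..<1::real}" ..
  interpret R: pair_prob_space "measure_pmf P"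
    "uniform_measure lborel {0..<1::real} \<Otimes>\<^sub>M uniform_measure lborel {0..<1::real}" ..
  show ?thesis unfolding uss_row_measure_def by (rule R.prob_space_axioms)
qed

lemma measurable_uss_row_item[measurable]: "fst \<in> measurable (uss_row_measure P) (count_space UNIV)"
  unfolding uss_row_measure_def by measurable

lemma prob_uss_row_item: "measure (uss_row_measure P) {r \<in> space (uss_row_measure P). fst r = x} = pmf P x"
proof -
  interpret U: prob_space "uniform_measure lborel {0..<1::real}" by (rule prob_space_unit_uniform)
  interpret UU: pair_prob_space "uniform_measure lborel {0..<1::real}" "uniform_measure lborel {0..<1::real}" ..
  have "measure (uss_row_measure P) {r \<in> space (uss_row_measure P). fst r = x}
      = measure (distr (uss_row_measure P) (measure_pmf P) fst) {x}"
    by (subst measure_distr) (auto simp: uss_row_measure_def intro!: arg_cong2[where f=measure])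
  also have "\<dots> = pmf P x"
    by (simp add: uss_row_measure_def UU.distr_pair_fst measure_pmf_single)
  finally show ?thesis .
qed

lemma AE_uss_row_selector_less_one: "AE r in uss_row_measure P. fst (snd r) < 1"
proof -
  interpret U: prob_space "uniform_measure lborel {0..<1::real}" by (rule prob_space_unit_uniform)
  interpret UU: pair_prob_space "uniform_measure lborel {0..<1::real}" "uniform_measure lborel {0..<1::real}" ..
  interpret R: pair_prob_space "measure_pmf P"
    "uniform_measure lborel {0..<1::real} \<Otimes>\<^sub>M uniform_measure lborel {0..<1::real}" ..
  have u: "AE u in uniform_measure lborel {0..<1::real}. u < 1"
    by (subst AE_uniform_measure) auto
  have "AE y in uniform_measure lborel {0..<1::real} \<Otimes>\<^sub>M uniform_measure lborel {0..<1::real}. fst y < 1"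
    by (rule UU.AE_pair_measure, measurable) (use u in auto)
  then show ?thesis unfolding uss_row_measure_def
    by (intro R.AE_pair_measure) auto
qed

subsection \<open>Deterministic behaviour of the sketch\<close>

text \<open>For u = 1 the index into the list of minimal bins in uss_step would be out of
  range; this happens with probability 0.\<close>

definition uss_admissible :: "(nat \<times> real \<times> real) stream \<Rightarrow> bool" where
  "uss_admissible \<omega> \<longleftrightarrow> (\<forall>k. fst (snd (\<omega> !! k)) < 1)"

lemma AE_uss_admissible: "AE \<omega> in uss_space P. uss_admissible \<omega>"
proof -
  interpret row: prob_space "uss_row_measure P" by (rule prob_space_uss_row_measure)
  show ?thesis
    using row.AE_stream_all[OF _ AE_uss_row_selector_less_one]
    unfolding uss_space_def by (simp add: uss_admissible_def stream_all_def sset_range uss_row_measure_def)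
qed

definition uss_label :: "nat \<Rightarrow> (nat \<times> real \<times> real) stream \<Rightarrow> nat \<Rightarrow> nat \<Rightarrow> nat option" where
  "uss_label m \<omega> i t = fst (uss_run m \<omega> t) i"

lemma uss_step_increments_one_bin:
  assumes "u < 1" and "0 < m"
  obtains j where "j < m" "snd (uss_step m (lab, cnt) (x, u, v)) = cnt(j := Suc (cnt j))"
    "\<And>i. i \<noteq> j \<Longrightarrow> fst (uss_step m (lab, cnt) (x, u, v)) i = lab i"
    "fst (uss_step m (lab, cnt) (x, u, v)) j \<in> {lab j, Some x}"
    "cnt j = Min (cnt ` {..<m}) \<or> lab j = Some x"
proof (cases "\<exists>i<m. lab i = Some x")
  case True
  define j where "j = (LEAST i. i < m \<and> lab i = Some x)"
  have "j < m \<and> lab j = Some x" unfolding j_def using True by (rule LeastI_ex)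
  with True show ?thesis
    by (intro that[of j]) (auto simp: uss_step_def j_def[symmetric] Let_def)
next
  case False
  define Nmin where "Nmin = Min (cnt ` {..<m})"
  define T where "T = filter (\<lambda>i. cnt i = Nmin) [0..<m]"
  define j where "j = T ! nat \<lfloor>u * real (length T)\<rfloor>"
  have "Nmin \<in> cnt ` {..<m}" unfolding Nmin_def using \<open>0 < m\<close> by (intro Min_in) auto
  then have "T \<noteq> []" by (auto simp: T_def filter_empty_conv)
  then have "u * real (length T) < real (length T)" using \<open>u < 1\<close> by simp
  then have "\<lfloor>u * real (length T)\<rfloor> < int (length T)" by (simp add: floor_less_iff)
  then have "nat \<lfloor>u * real (length T)\<rfloor> < nat (int (length T))"
    using \<open>T \<noteq> []\<close> by (subst zless_nat_conj) auto
  then have "nat \<lfloor>u * real (length T)\<rfloor> < length T" by simp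
  then have "j \<in> set T" unfolding j_def by (rule nth_mem)
  then have "j < m" "cnt j = Nmin" by (auto simp: T_def)
  with False show ?thesis
    by (intro that[of j]) (auto simp: uss_step_def Let_def Nmin_def[symmetric] T_def[symmetric] j_def[symmetric])
qed

lemma uss_run_Suc_increments_one_bin:
  assumes "uss_admissible \<omega>" and "0 < m"
  obtains j where "j < m"
    "\<And>i. uss_bin m \<omega> i (Suc t) = uss_bin m \<omega> i t + (if i = j then 1 else 0)"
    "\<And>i. i \<noteq> j \<Longrightarrow> uss_label m \<omega> i (Suc t) = uss_label m \<omega> i t"
    "uss_label m \<omega> j (Suc t) \<in> {uss_label m \<omega> j t, Some (fst (\<omega> !! t))}"
    "uss_bin m \<omega> j t = Min ((\<lambda>i. uss_bin m \<omega> i t) ` {..<m})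
      \<or> uss_label m \<omega> j t = Some (fst (\<omega> !! t))"
proof -
  obtain lab cnt where st: "uss_run m \<omega> t = (lab, cnt)" by fastforce
  obtain x u v where r: "\<omega> !! t = (x, u, v)" by (cases "\<omega> !! t") auto
  have "u < 1" using assms(1) r unfolding uss_admissible_def by (metis fst_conv snd_conv)
  from uss_step_increments_one_bin[OF this \<open>0 < m\<close>, of lab cnt x v] obtain j where "j < m"
    "snd (uss_step m (lab, cnt) (x, u, v)) = cnt(j := Suc (cnt j))"
    "\<And>i. i \<noteq> j \<Longrightarrow> fst (uss_step m (lab, cnt) (x, u, v)) i = lab i"
    "fst (uss_step m (lab, cnt) (x, u, v)) j \<in> {lab j, Some x}"
    "cnt j = Min (cnt ` {..<m}) \<or> lab j = Some x" by blast
  then show ?thesis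
    by (intro that[of j]) (auto simp: uss_bin_def uss_label_def st r image_def)
qed

lemma sum_uss_bin:
  assumes "uss_admissible \<omega>" and "0 < m"
  shows "(\<Sum>i<m. uss_bin m \<omega> i t) = t"
proof (induction t)
  case 0
  show ?case by (simp add: uss_bin_def uss_init_def)
next
  case (Suc t)
  obtain j where "j < m" "\<And>i. uss_bin m \<omega> i (Suc t) = uss_bin m \<omega> i t + (if i = j then 1 else 0)"
    using uss_run_Suc_increments_one_bin[OF assms] by metis
  with Suc.IH show ?case by (simp add: sum.distrib)
qed

lemma uss_min_bin_le_average:
  assumes "uss_admissible \<omega>" and "0 < m"
  shows "m * Min ((\<lambda>i. uss_bin m \<omega> i t) ` {..<m}) \<le> t"
proof -
  have "m * Min ((\<lambda>i. uss_bin m \<omega> i t) ` {..<m}) = (\<Sum>i<m. Min ((\<lambda>i. uss_bin m \<omega> i t) ` {..<m}))"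
    by simp
  also have "\<dots> \<le> (\<Sum>i<m. uss_bin m \<omega> i t)" by (intro sum_mono Min_le) auto
  finally show ?thesis using sum_uss_bin[OF assms] by simp
qed

lemma uss_label_earlier_item:
  assumes "uss_admissible \<omega>" and "0 < m"
  shows "uss_label m \<omega> i t = None \<or> (\<exists>j<t. uss_label m \<omega> i t = Some (fst (\<omega> !! j)))"
proof (induction t)
  case 0
  show ?case by (simp add: uss_label_def uss_init_def)
next
  case (Suc t)
  obtain j where "\<And>i. i \<noteq> j \<Longrightarrow> uss_label m \<omega> i (Suc t) = uss_label m \<omega> i t"
    "uss_label m \<omega> j (Suc t) \<in> {uss_label m \<omega> j t, Some (fst (\<omega> !! t))}"
    using uss_run_Suc_increments_one_bin[OF assms] by metis
  then have "uss_label m \<omega> i (Suc t) \<in> {uss_label m \<omega> i t, Some (fst (\<omega> !! t))}"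
    by (cases "i = j") auto
  with Suc.IH show ?case by (auto intro: less_SucI)
qed

lemma uss_step_above_average:
  assumes "uss_admissible \<omega>" and "0 < m" and above: "t < m * uss_bin m \<omega> i t"
  shows "uss_label m \<omega> i (Suc t) = uss_label m \<omega> i t"
    and "uss_bin m \<omega> i (Suc t)
      \<le> uss_bin m \<omega> i t + (if uss_label m \<omega> i t = Some (fst (\<omega> !! t)) then 1 else 0)"
proof -
  obtain j where "j < m"
    and bin: "\<And>i. uss_bin m \<omega> i (Suc t) = uss_bin m \<omega> i t + (if i = j then 1 else 0)"
    and label: "\<And>i. i \<noteq> j \<Longrightarrow> uss_label m \<omega> i (Suc t) = uss_label m \<omega> i t"
    and label_j: "uss_label m \<omega> j (Suc t) \<in> {uss_label m \<omega> j t, Some (fst (\<omega> !! t))}"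
    and j_min: "uss_bin m \<omega> j t = Min ((\<lambda>i. uss_bin m \<omega> i t) ` {..<m})
      \<or> uss_label m \<omega> j t = Some (fst (\<omega> !! t))"
    using uss_run_Suc_increments_one_bin[OF assms(1,2), where t=t] by blast
  have "m * Min ((\<lambda>i. uss_bin m \<omega> i t) ` {..<m}) < m * uss_bin m \<omega> i t"
    using uss_min_bin_le_average[OF assms(1,2), of t] above by linarith
  then have "Min ((\<lambda>i. uss_bin m \<omega> i t) ` {..<m}) < uss_bin m \<omega> i t" by simp
  with j_min have "i = j \<Longrightarrow> uss_label m \<omega> i t = Some (fst (\<omega> !! t))" by auto
  with bin label label_j show "uss_label m \<omega> i (Suc t) = uss_label m \<omega> i t"
    and "uss_bin m \<omega> i (Suc t)
      \<le> uss_bin m \<omega> i t + (if uss_label m \<omega> i t = Some (fst (\<omega> !! t)) then 1 else 0)"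
    by (cases "i = j", simp_all)+
qed

lemma uss_window_above_average:
  assumes "uss_admissible \<omega>" and "0 < m"
    and above: "\<And>r. a \<le> r \<Longrightarrow> r < a + n \<Longrightarrow> r < m * uss_bin m \<omega> i r"
  shows "uss_label m \<omega> i (a + n) = uss_label m \<omega> i a
    \<and> uss_bin m \<omega> i (a + n) \<le> uss_bin m \<omega> i a
        + (case uss_label m \<omega> i a of None \<Rightarrow> 0 | Some x \<Rightarrow> window_count fst \<omega> x a n)"
  using above
proof (induction n)
  case 0
  show ?case by (cases "uss_label m \<omega> i a") (auto simp: window_count_def)
next
  case (Suc n)
  then have IH: "uss_label m \<omega> i (a + n) = uss_label m \<omega> i a"
    "uss_bin m \<omega> i (a + n) \<le> uss_bin m \<omega> i a
        + (case uss_label m \<omega> i a of None \<Rightarrow> 0 | Some x \<Rightarrow> window_count fst \<omega> x a n)"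
    by auto
  have "a + n < m * uss_bin m \<omega> i (a + n)" using Suc.prems by simp
  note step = uss_step_above_average[OF assms(1,2) this]
  show ?case
    using IH step by (cases "uss_label m \<omega> i a") (auto simp: window_count_Suc split: if_splits)
qed

lemma uss_last_time_at_most_average:
  obtains s where "s \<le> t" "m * uss_bin m \<omega> i s \<le> s"
    "\<And>r. s < r \<Longrightarrow> r \<le> t \<Longrightarrow> r < m * uss_bin m \<omega> i r"
proof (induction t arbitrary: thesis)
  case 0
  show ?case by (rule 0[of 0]) (auto simp: uss_bin_def uss_init_def)
next
  case (Suc t)
  show ?case
  proof (cases "m * uss_bin m \<omega> i (Suc t) \<le> Suc t")
    case True
    then show ?thesis by (intro Suc.prems[of "Suc t"]) auto
  next
    case False
    obtain s where "s \<le> t" "m * uss_bin m \<omega> i s \<le> s"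
      "\<And>r. s < r \<Longrightarrow> r \<le> t \<Longrightarrow> r < m * uss_bin m \<omega> i r"
      using Suc.IH by blast
    with False show ?thesis by (intro Suc.prems[of s]) (auto simp: le_Suc_eq)
  qed
qed

lemma uss_bin_excess_less:
  assumes "uss_admissible \<omega>" and "0 < m" and "0 \<le> c"
    and window: "\<forall>s<t. \<forall>j\<le>s.
      real (window_count fst \<omega> (fst (\<omega> !! j)) (Suc s) (t - Suc s)) - real (t - Suc s) / real m < c"
  shows "real (uss_bin m \<omega> i t) - real t / real m < c + 1"
proof -
  obtain s where "s \<le> t" and at_most: "m * uss_bin m \<omega> i s \<le> s"
    and above: "\<And>r. s < r \<Longrightarrow> r \<le> t \<Longrightarrow> r < m * uss_bin m \<omega> i r"
    using uss_last_time_at_most_average[where t=t and m=m and \<omega>=\<omega> and i=i] by blast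
  have s_avg: "real (uss_bin m \<omega> i s) \<le> real s / real m"
    using at_most \<open>0 < m\<close> by (simp add: field_simps flip: of_nat_mult)
  show ?thesis
  proof (cases "s = t")
    case True
    with s_avg \<open>0 \<le> c\<close> show ?thesis by simp
  next
    case False
    define n where "n = t - Suc s"
    have t_eq: "t = Suc s + n" using False \<open>s \<le> t\<close> by (simp add: n_def)
    define W where "W = (case uss_label m \<omega> i (Suc s) of None \<Rightarrow> 0
      | Some x \<Rightarrow> window_count fst \<omega> x (Suc s) n)"
    have "uss_bin m \<omega> i t \<le> uss_bin m \<omega> i (Suc s) + W"
      unfolding t_eq W_def
      by (intro conjunct2[OF uss_window_above_average] assms above) (use t_eq in auto)
    moreover obtain j where "\<And>i. uss_bin m \<omega> i (Suc s) = uss_bin m \<omega> i s + (if i = j then 1 else 0)"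
      using uss_run_Suc_increments_one_bin[OF assms(1,2), where t=s] by blast
    then have "uss_bin m \<omega> i (Suc s) \<le> uss_bin m \<omega> i s + 1" by simp
    moreover have "real W - real n / real m \<le> c"
    proof (cases "uss_label m \<omega> i (Suc s)")
      case None
      then have "W = 0" by (simp add: W_def)
      moreover have "0 \<le> real n / real m" by simp
      ultimately show ?thesis using \<open>0 \<le> c\<close> by linarith
    next
      case (Some x)
      then obtain j where "j \<le> s" and x: "x = fst (\<omega> !! j)"
        using uss_label_earlier_item[OF assms(1,2), of i "Suc s"] by (auto simp: less_Suc_eq_le)
      have "s < t" using False \<open>s \<le> t\<close> by simp
      from window[rule_format, OF this \<open>j \<le> s\<close>] Some x show ?thesis
        by (simp add: W_def n_def)
    qed
    moreover have "real t / real m = real s / real m + 1 / real m + real n / real m"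
      using t_eq by (simp add: add_divide_distrib)
    moreover have "0 < 1 / real m" using \<open>0 < m\<close> by simp
    ultimately show ?thesis using s_avg by linarith
  qed
qed

theorem lemma2:
  fixes m :: nat and P :: "nat pmf"
  assumes "0 < m"
    and "antimono (pmf P)"
    and "pmf P 0 < 1 / real m"
  shows "AE \<omega> in uss_space P. eventually (\<lambda>t. \<forall>i<m.
            real (uss_bin m \<omega> i t) - real t / real m < (ln (real t))\<^sup>2 + 1) sequentially"
proof -
  interpret row: prob_space "uss_row_measure P" by (rule prob_space_uss_row_measure)
  obtain l where "0 < l" and rate_0: "(exp l - 1) * pmf P 0 \<le> l * (1 / real m)"
    using exists_exp_rate[OF pmf_nonneg assms(3)] by blast
  have rate: "(exp l - 1) * \<P>(r in uss_row_measure P. fst r = x) \<le> l * (1 / real m)" for x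
  proof -
    have "pmf P x \<le> pmf P 0" using \<open>antimono (pmf P)\<close> by (simp add: antimono_def)
    then have "(exp l - 1) * pmf P x \<le> (exp l - 1) * pmf P 0"
      using \<open>0 < l\<close> by (intro mult_left_mono) auto
    with rate_0 show ?thesis by (simp add: prob_uss_row_item)
  qed
  have "AE \<omega> in uss_space P. eventually (\<lambda>t. \<forall>s<t. \<forall>j\<le>s.
      real (window_count fst \<omega> (fst (\<omega> !! j)) (Suc s) (t - Suc s)) - real (t - Suc s) / real m
        < (ln (real t))\<^sup>2) sequentially"
    using row.AE_eventually_window_count_excess_less[OF measurable_uss_row_item \<open>0 < l\<close> rate]
    unfolding uss_space_def by simp
  with AE_uss_admissible show ?thesis
    by eventually_elim (auto elim!: eventually_mono intro: uss_bin_excess_less[OF _ \<open>0 < m\<close>])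
qed

end
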